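(* Let $n\ge2$, $k\ge2$ and $1\le i\le k-1$. Let $Q$ be the graph with vertex set $\mathbb{Z}_n^i$ in which two distinct words $\boldsymbol\alpha,\boldsymbol\beta\in\mathbb{Z}_n^i$ are adjacent if and only if some vertex of $H_{n,k}$ with prefix $\boldsymbol\alpha$ (first $i$ coordinates equal to $\boldsymbol\alpha$) is adjacent in $H_{n,k}$ to some vertex with prefix $\boldsymbol\beta$. Then $Q$ is equal to (in particular isomorphic to) $H_{n,i}$, i.e., contracting each of the $n^i$ blocks of vertices with a common prefix of length $i$ to a single vertex (and merging multiple edges) yields $H_{n,i}$.
   Context: Let $n\ge 2$ and $k\ge 1$ be integers. $H_{n,k}$ is the simple undirected graph with vertex set $V_{n,k}=\mathbb{Z}_n^k$ (so $|V_{n,k}|=n^k$), whose vertices are written as strings $x_1x_2\ldots x_k$ with $x_j\in\mathbb{Z}_n=\{0,1,\ldots,n-1\}$. Two distinct vertices are adjacent if and only if they are related by one of the following rules. For $i=0$ the prefix $x_1\ldots x_i$ is empty, and "$0\ldots0$" denotes a string of zeros completing the word to length $k$. (R1) $x_1\ldots x_{k-1}x_k\sim x_1\ldots x_{k-1}y_k$ whenever $y_k\neq x_k$. (R2) For $0\le i\le k-2$: $x_1\ldots x_i0\ldots0\sim x_1\ldots x_ix_{i+1}\ldots x_k$ whenever $x_j\neq 0$ for all $i+1\le j\le k$. (R3) For $1\le i\le k-1$: $x_1\ldots x_{i-1}x_i0\ldots0\sim x_1\ldots x_{i-1}y_i0\ldots0$ whenever $x_i,y_i\neq0$ and $x_i\ne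 y_i$. In particular, $H_{n,1}$ is the complete graph $K_n$. *)

theory Defs
  imports Main
begin

definition Hvert :: "nat \<Rightarrow> nat \<Rightarrow> nat list set" where
  "Hvert n k = {xs. length xs = k \<and> (\<forall>x\<in>set xs. x < n)}"

definition R1 :: "nat \<Rightarrow> nat \<Rightarrow> nat list \<Rightarrow> nat list \<Rightarrow> bool" where
  "R1 n k x y \<longleftrightarrow> (\<exists>p a b. length p = k - 1 \<and> x = p @ [a] \<and> y = p @ [b] \<and> a \<noteq> b)"

text \<open>(R2): for 0 <= i <= k-2, p 0...0 ~ p x_{i+1}...x_k with all x_j nonzero
  (stated in one direction; adjacency takes the symmetric closure).\<close>
definition R2 :: "nat \<Rightarrow> nat \<Rightarrow> nat list \<Rightarrow> nat list \<Rightarrow> bool" where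
  "R2 n k x y \<longleftrightarrow> (\<exists>i p ys. i + 2 \<le> k \<and> length p = i \<and> length ys = k - i \<and>
      (\<forall>z\<in>set ys. z \<noteq> 0) \<and> x = p @ replicate (k - i) 0 \<and> y = p @ ys)"

definition R3 :: "nat \<Rightarrow> nat \<Rightarrow> nat list \<Rightarrow> nat list \<Rightarrow> bool" where
  "R3 n k x y \<longleftrightarrow> (\<exists>i p a b. 1 \<le> i \<and> i \<le> k - 1 \<and> length p = i - 1 \<and>
      a \<noteq> 0 \<and> b \<noteq> 0 \<and> a \<noteq> b \<and>
      x = p @ [a] @ replicate (k - i) 0 \<and> y = p @ [b] @ replicate (k - i) 0)"

definition H_adj :: "nat \<Rightarrow> nat \<Rightarrow> nat list \<Rightarrow> nat list \<Rightarrow> bool" where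
  "H_adj n k x y \<longleftrightarrow> x \<in> Hvert n k \<and> y \<in> Hvert n k \<and> x \<noteq> y \<and>
     (R1 n k x y \<or> R2 n k x y \<or> R2 n k y x \<or> R3 n k x y)"

definition Q_adj :: "nat \<Rightarrow> nat \<Rightarrow> nat \<Rightarrow> nat list \<Rightarrow> nat list \<Rightarrow> bool" where
  "Q_adj n k i \<alpha> \<beta> \<longleftrightarrow> \<alpha> \<in> Hvert n i \<and> \<beta> \<in> Hvert n i \<and> \<alpha> \<noteq> \<beta> \<and>
     (\<exists>x y. x \<in> Hvert n k \<and> y \<in> Hvert n k \<and> take i x = \<alpha> \<and> take i y = \<beta> \<and> H_adj n k x y)"

end

theory Submission
  imports Defs
begin

text \<open>Truncating to the first \<open>i\<close> letters maps every rule of \<open>H\<^sub>n\<^sub>,\<^sub>k\<close> to a rule of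
  \<open>H\<^sub>n\<^sub>,\<^sub>i\<close> or collapses the edge: (R1) always collapses, (R2) survives as (R2) or, when
  the zero block starts exactly at position \<open>i\<close>, becomes (R1), and (R3) survives as (R3) or,
  when the changed letter is the \<open>i\<close>-th one, becomes (R1). Conversely every edge of \<open>H\<^sub>n\<^sub>,\<^sub>i\<close>
  is the image of an edge of \<open>H\<^sub>n\<^sub>,\<^sub>k\<close> obtained by padding both endpoints with \<open>0\<dots>0\<close> or \<open>1\<dots>1\<close>;
  an (R1) edge with last letters \<open>0\<close> and \<open>b \<noteq> 0\<close> lifts to an (R2) edge, one with both
  last letters nonzero to an (R3) edge.\<close>

definition H_rule :: "nat \<Rightarrow> nat \<Rightarrow> nat list \<Rightarrow> nat list \<Rightarrow> bool" where
  "H_rule n k x y \<longleftrightarrow> R1 n k x y \<or> R2 n k x y \<or> R2 n k y x \<or> R3 n k x y"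

lemma H_adj_iff_H_rule:
  "H_adj n k x y \<longleftrightarrow> x \<in> Hvert n k \<and> y \<in> Hvert n k \<and> x \<noteq> y \<and> H_rule n k x y"
  by (simp add: H_adj_def H_rule_def)

lemma R1_sym: "R1 n k x y \<Longrightarrow> R1 n k y x"
  unfolding R1_def by metis

lemma R1_take_eq:
  assumes "R1 n k x y" "i < k"
  shows "take i x = take i y"
  using assms by (auto simp: R1_def)

lemma R2_take:
  assumes "R2 n k x y" "i \<le> k" "take i x \<noteq> take i y"
  shows "R1 n i (take i x) (take i y) \<or> R2 n i (take i x) (take i y)"
proof -
  obtain j p ys where p: "j + 2 \<le> k" "length p = j" "length ys = k - j" "\<forall>z\<in>set ys. z \<noteq> 0"
      "x = p @ replicate (k - j) 0" "y = p @ ys"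
    using assms(1) by (auto simp: R2_def)
  have "j < i"
    using assms(3) p by (cases "j < i") auto
  then have tx: "take i x = p @ replicate (i - j) 0" and ty: "take i y = p @ take (i - j) ys"
    using p assms(2) by (simp_all add: take_replicate)
  show ?thesis
  proof (cases "j + 2 \<le> i")
    case True
    then have "R2 n i (take i x) (take i y)"
      unfolding R2_def using p tx ty \<open>j < i\<close> assms(2)
      by (intro exI[of _ j] exI[of _ p] exI[of _ "take (i - j) ys"]) (auto dest: in_set_takeD)
    then show ?thesis ..
  next
    case False
    with \<open>j < i\<close> have "i = j + 1" by simp
    obtain c cs where "ys = c # cs"
      using p by (cases ys) auto
    then have "R1 n i (take i x) (take i y)"
      unfolding R1_def using p tx ty \<open>i = j + 1\<close>
      by (intro exI[of _ p] exI[of _ 0] exI[of _ c]) auto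
    then show ?thesis ..
  qed
qed

lemma R3_take:
  assumes "R3 n k x y" "i \<le> k" "take i x \<noteq> take i y"
  shows "R1 n i (take i x) (take i y) \<or> R3 n i (take i x) (take i y)"
proof -
  obtain j p a b where p: "1 \<le> j" "j \<le> k - 1" "length p = j - 1" "a \<noteq> 0" "b \<noteq> 0" "a \<noteq> b"
      "x = p @ [a] @ replicate (k - j) 0" "y = p @ [b] @ replicate (k - j) 0"
    using assms(1) by (auto simp: R3_def)
  have "j \<le> i"
    using assms(3) p by (cases "j \<le> i") auto
  show ?thesis
  proof (cases "i = j")
    case True
    then have "R1 n i (take i x) (take i y)"
      unfolding R1_def using p by (intro exI[of _ p] exI[of _ a] exI[of _ b]) auto
    then show ?thesis ..
  next
    case False
    with \<open>j \<le> i\<close> have tx: "take i x = p @ [a] @ replicate (i - j) 0"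
        and ty: "take i y = p @ [b] @ replicate (i - j) 0"
      using p assms(2) by (auto simp: take_replicate Suc_diff_le)
    have "R3 n i (take i x) (take i y)"
      unfolding R3_def using p tx ty \<open>j \<le> i\<close> False
      by (intro exI[of _ j] exI[of _ p] exI[of _ a] exI[of _ b]) auto
    then show ?thesis ..
  qed
qed

lemma H_rule_take:
  assumes "H_rule n k x y" "i < k" "take i x \<noteq> take i y"
  shows "H_rule n i (take i x) (take i y)"
  using assms R1_take_eq[of n k x y i] R2_take[of n k x y i] R2_take[of n k y x i]
    R3_take[of n k x y i]
  unfolding H_rule_def by (auto dest: R1_sym)

lemma R2_append:
  assumes "R2 n i \<alpha> \<beta>" "i \<le> k" "length v = k - i" "\<forall>z\<in>set v. z \<noteq> 0"
  shows "R2 n k (\<alpha> @ replicate (k - i) 0) (\<beta> @ v)"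
proof -
  obtain j p ys where p: "j + 2 \<le> i" "length p = j" "length ys = i - j" "\<forall>z\<in>set ys. z \<noteq> 0"
      "\<alpha> = p @ replicate (i - j) 0" "\<beta> = p @ ys"
    using assms(1) by (auto simp: R2_def)
  have "replicate (i - j) 0 @ replicate (k - i) 0 = replicate (k - j) (0::nat)"
    using p(1) assms(2) by (simp flip: replicate_add)
  then show ?thesis
    unfolding R2_def using p assms(2-4)
    by (intro exI[of _ j] exI[of _ p] exI[of _ "ys @ v"]) auto
qed

lemma R3_append:
  assumes "R3 n i \<alpha> \<beta>" "i \<le> k"
  shows "R3 n k (\<alpha> @ replicate (k - i) 0) (\<beta> @ replicate (k - i) 0)"
proof -
  obtain j p a b where p: "1 \<le> j" "j \<le> i - 1" "length p = j - 1" "a \<noteq> 0" "b \<noteq> 0" "a \<noteq> b"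
      "\<alpha> = p @ [a] @ replicate (i - j) 0" "\<beta> = p @ [b] @ replicate (i - j) 0"
    using assms(1) by (auto simp: R3_def)
  have "replicate (i - j) 0 @ replicate (k - i) 0 = replicate (k - j) (0::nat)"
    using p(2) assms(2) by (simp flip: replicate_add)
  then show ?thesis
    unfolding R3_def using p assms(2)
    by (intro exI[of _ j] exI[of _ p] exI[of _ a] exI[of _ b]) auto
qed

lemma R1_lift:
  assumes "R1 n i \<alpha> \<beta>" "1 \<le> i" "i < k"
  defines "zs \<equiv> replicate (k - i) (0::nat)" and "os \<equiv> replicate (k - i) (1::nat)"
  shows "H_rule n k (\<alpha> @ zs) (\<beta> @ zs) \<or> H_rule n k (\<alpha> @ zs) (\<beta> @ os)
    \<or> H_rule n k (\<alpha> @ os) (\<beta> @ zs)"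
proof -
  obtain p a b where p: "length p = i - 1" "\<alpha> = p @ [a]" "\<beta> = p @ [b]" "a \<noteq> b"
    using assms(1) by (auto simp: R1_def)
  have R2_lift: "R2 n k (p @ [0] @ zs) (p @ [c] @ os)" if "c \<noteq> 0" for c
    unfolding R2_def zs_def os_def using p that assms(2,3)
    by (intro exI[of _ "i - 1"] exI[of _ p] exI[of _ "c # os"])
      (auto simp: os_def Suc_diff_le simp flip: replicate_Suc)
  consider "a = 0" | "b = 0" | "a \<noteq> 0" "b \<noteq> 0"
    by blast
  then show ?thesis
  proof cases
    case 1
    then show ?thesis
      using R2_lift[of b] p by (simp add: H_rule_def)
  next
    case 2
    then show ?thesis
      using R2_lift[of a] p by (simp add: H_rule_def)
  next
    case 3
    have "R3 n k (\<alpha> @ zs) (\<beta> @ zs)"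
      unfolding R3_def zs_def using p 3 assms(2,3)
      by (intro exI[of _ i] exI[of _ p] exI[of _ a] exI[of _ b]) auto
    then show ?thesis
      by (simp add: H_rule_def)
  qed
qed

lemma H_rule_lift:
  assumes "H_rule n i \<alpha> \<beta>" "2 \<le> n" "1 \<le> i" "i < k"
  shows "\<exists>u v. u \<in> Hvert n (k - i) \<and> v \<in> Hvert n (k - i) \<and> H_rule n k (\<alpha> @ u) (\<beta> @ v)"
proof -
  define zs where "zs = replicate (k - i) (0::nat)"
  define os where "os = replicate (k - i) (1::nat)"
  have pads: "zs \<in> Hvert n (k - i)" "os \<in> Hvert n (k - i)"
    using assms(2) by (auto simp: Hvert_def zs_def os_def)
  have "H_rule n k (\<alpha> @ zs) (\<beta> @ zs) \<or> H_rule n k (\<alpha> @ zs) (\<beta> @ os)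
    \<or> H_rule n k (\<alpha> @ os) (\<beta> @ zs)"
    using assms(1,3,4) R1_lift[of n i \<alpha> \<beta> k] R3_append[of n i \<alpha> \<beta> k]
      R2_append[of n i \<alpha> \<beta> k os] R2_append[of n i \<beta> \<alpha> k os]
    unfolding H_rule_def zs_def os_def by auto
  then show ?thesis
    using pads by blast
qed

theorem mainTheorem3:
  fixes n k i :: nat
  assumes "n \<ge> 2" and "k \<ge> 2" and "1 \<le> i" and "i \<le> k - 1"
  shows "Q_adj n k i = H_adj n i"
proof (intro ext iffI)
  fix \<alpha> \<beta>
  assume "Q_adj n k i \<alpha> \<beta>"
  then obtain x y where "\<alpha> \<in> Hvert n i" "\<beta> \<in> Hvert n i" "\<alpha> \<noteq> \<beta>"
      "take i x = \<alpha>" "take i y = \<beta>" "H_rule n k x y"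
    by (auto simp: Q_adj_def H_adj_iff_H_rule)
  then show "H_adj n i \<alpha> \<beta>"
    using H_rule_take[of n k x y i] assms by (auto simp: H_adj_iff_H_rule)
next
  fix \<alpha> \<beta>
  assume adj: "H_adj n i \<alpha> \<beta>"
  then have "length \<alpha> = i" "length \<beta> = i"
    by (auto simp: H_adj_iff_H_rule Hvert_def)
  moreover obtain u v where "u \<in> Hvert n (k - i)" "v \<in> Hvert n (k - i)"
      "H_rule n k (\<alpha> @ u) (\<beta> @ v)"
    using H_rule_lift[of n i \<alpha> \<beta> k] adj assms by (force simp: H_adj_iff_H_rule)
  ultimately show "Q_adj n k i \<alpha> \<beta>"
    using adj assms unfolding Q_adj_def H_adj_iff_H_rule
    by (intro conjI exI[of _ "\<alpha> @ u"] exI[of _ "\<beta> @ v"]) (auto simp: Hvert_def)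
qed

end
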